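(* Let $(\mathcal A,\mathcal T,(-))$ be a meta-tangible $\mathcal T$-monoid module triple with identity $\mathbb 1\in\mathcal T$, and put $e=\mathbb 1(-)\mathbb 1$, $e'=e+\mathbb 1$, $\mathbf 3=\mathbb 1+\mathbb 1+\mathbb 1$. Then exactly one of the following holds: (i) $e'\in\mathcal T$, and then $e'=\mathbb 1$; (ii) $e'\in\mathcal T^\circ$, and then $e'=e$; (iii) $e'\notin\mathcal T\cup\mathcal T^\circ$, and then $(-)\mathbb 1=\mathbb 1$ and $e'=\mathbf 3$.
   Context: $(\mathcal A,+,\mathbb 0)$ commutative monoid, $\mathcal T\subseteq\mathcal A\setminus\{\mathbb 0\}$. A negation map is $(-):\mathcal A\to\mathcal A$ with $(-)(b_1+b_2)=(-)b_1+(-)b_2$, $(-)((-)b)=b$, $(-)\mathbb 0=\mathbb 0$, $(-)\mathcal T\subseteq\mathcal T$. Write $b(-)c:=b+((-)c)$, $b^\circ:=b(-)b$, $\mathcal A^\circ=\{b^\circ:b\in\mathcal A\}$, $\mathcal T^\circ=\{a^\circ:a\in\mathcal T\}$. A $\mathcal T$-triple $(\mathcal A,\mathcal T,(-))$: such data with an action $\mathcal T\times\mathcal A\to\mathcal A$ satisfying $a(b_1+b_2)=ab_1+ab_2$, $a\mathbb 0=\mathbb 0$, $(-)(ab)=((-)a)b=a((-)b)$, with $\mathcal T\cap\mathcal A^\circ=\emptyset$ and every element of $\mathcal A$ a finite sum of elements of $\mathcal T$. It is a $\mathcal T$-monoid module triple if moreover $\mathcal T$ is a monoid with identity $\mathbb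 1$ whose multiplication is the restriction of the action, $\mathbb 1b=b$ and $(a_1a_2)b=a_1(a_2b)$. The triple is meta-tangible if $a+b\in\mathcal T$ for all $a,b\in\mathcal T$ with $b\neq(-)a$. *)

theory Defs
  imports Main
begin

text \<open>The ambient commutative monoid (A,+,0) is the type 'a. T is a subset,
 neg is the negation map (-), act is the action T x A -> A (only its values
 at a in T matter).\<close>

definition quasi_zeros :: "('a::comm_monoid_add \<Rightarrow> 'a) \<Rightarrow> 'a set" where
  "quasi_zeros neg = {b + neg b | b. True}"

definition tang_circ :: "'a::comm_monoid_add set \<Rightarrow> ('a \<Rightarrow> 'a) \<Rightarrow> 'a set" where
  "tang_circ T neg = {a + neg a | a. a \<in> T}"

definition negation_map :: "'a::comm_monoid_add set \<Rightarrow> ('a \<Rightarrow> 'a) \<Rightarrow> bool" where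
  "negation_map T neg \<longleftrightarrow>
     (\<forall>b1 b2. neg (b1 + b2) = neg b1 + neg b2) \<and>
     (\<forall>b. neg (neg b) = b) \<and> neg 0 = 0 \<and> neg ` T \<subseteq> T"

definition T_triple :: "'a::comm_monoid_add set \<Rightarrow> ('a \<Rightarrow> 'a) \<Rightarrow> ('a \<Rightarrow> 'a \<Rightarrow> 'a) \<Rightarrow> bool" where
  "T_triple T neg act \<longleftrightarrow>
     T \<subseteq> UNIV - {0} \<and> negation_map T neg \<and>
     (\<forall>a\<in>T. \<forall>b1 b2. act a (b1 + b2) = act a b1 + act a b2) \<and>
     (\<forall>a\<in>T. act a 0 = 0) \<and>
     (\<forall>a\<in>T. \<forall>b. neg (act a b) = act (neg a) b \<and> neg (act a b) = act a (neg b)) \<and>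
     T \<inter> quasi_zeros neg = {} \<and>
     (\<forall>b. \<exists>xs. set xs \<subseteq> T \<and> b = sum_list xs)"

definition T_monoid_module_triple ::
  "'a::comm_monoid_add set \<Rightarrow> ('a \<Rightarrow> 'a) \<Rightarrow> ('a \<Rightarrow> 'a \<Rightarrow> 'a) \<Rightarrow> 'a \<Rightarrow> bool" where
  "T_monoid_module_triple T neg act one \<longleftrightarrow>
     T_triple T neg act \<and> one \<in> T \<and>
     (\<forall>a1\<in>T. \<forall>a2\<in>T. act a1 a2 \<in> T) \<and>
     (\<forall>a\<in>T. act a one = a) \<and>
     (\<forall>b. act one b = b) \<and>
     (\<forall>a1\<in>T. \<forall>a2\<in>T. \<forall>b. act (act a1 a2) b = act a1 (act a2 b))"

definition meta_tangible :: "'a::comm_monoid_add set \<Rightarrow> ('a \<Rightarrow> 'a) \<Rightarrow> bool" where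
  "meta_tangible T neg \<longleftrightarrow> (\<forall>a\<in>T. \<forall>b\<in>T. b \<noteq> neg a \<longrightarrow> a + b \<in> T)"

end

theory Submission
  imports Defs
begin

text \<open>Quasi-zeros b (-) b are never tangible, so by meta-tangibility a sum a + b of
  tangibles that is not tangible forces b = (-) a. Since e' + (-) 1 = 2 (-) 2, this gives e' = 1
  when e' is tangible; since e' = 2 + (-) 1, it gives 2 = 1 when (-) 1 <> 1 and e' is not
  tangible. If (-) 1 = 1, then e' = 3 and every tangible a satisfies (-) a = a 1 = a, so
  e' \<in> tang_circ T neg means 3 = a + a. For a <> 1 meta-tangibility gives 1 + a = a, hence
  3 = 4, and then a = 3a = 4a = 2a (-) 2a is a quasi-zero.\<close>

lemma T_triple_sum_neg_notin:
  assumes "T_triple T neg act"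
  shows "b + neg b \<notin> T"
proof
  assume "b + neg b \<in> T"
  moreover have "b + neg b \<in> quasi_zeros neg"
    unfolding quasi_zeros_def by auto
  ultimately show False
    using assms unfolding T_triple_def by auto
qed

lemma T_triple_tang_circ_disjoint:
  assumes "T_triple T neg act"
  shows "T \<inter> tang_circ T neg = {}"
  using T_triple_sum_neg_notin[OF assms] unfolding tang_circ_def by auto

lemma meta_tangible_sum_notin_imp_eq_neg:
  assumes "meta_tangible T neg" and "a \<in> T" and "b \<in> T" and "a + b \<notin> T"
  shows "b = neg a"
  using assms unfolding meta_tangible_def by auto

locale meta_tangible_module_triple =
  fixes T :: "'a::comm_monoid_add set" and neg :: "'a \<Rightarrow> 'a"
    and act :: "'a \<Rightarrow> 'a \<Rightarrow> 'a" and one :: 'a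
  assumes module_triple: "T_monoid_module_triple T neg act one"
    and meta_tangible: "meta_tangible T neg"
begin

lemma T_triple: "T_triple T neg act"
  using module_triple unfolding T_monoid_module_triple_def by auto

lemma one_in_T: "one \<in> T"
  using module_triple unfolding T_monoid_module_triple_def by auto

lemma act_one_right: "a \<in> T \<Longrightarrow> act a one = a"
  using module_triple unfolding T_monoid_module_triple_def by auto

lemma act_add_right: "a \<in> T \<Longrightarrow> act a (x + y) = act a x + act a y"
  using T_triple unfolding T_triple_def by blast

lemma neg_act_right: "a \<in> T \<Longrightarrow> neg (act a x) = act a (neg x)"
  using T_triple unfolding T_triple_def by blast

lemma neg_add: "neg (x + y) = neg x + neg y"
  and neg_neg [simp]: "neg (neg x) = x"
  and neg_in_T: "a \<in> T \<Longrightarrow> neg a \<in> T"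
  using T_triple unfolding T_triple_def negation_map_def by auto

lemma sum_neg_notin_T: "b + neg b \<notin> T"
  using T_triple_sum_neg_notin[OF T_triple] .

lemma add_in_T: "a \<in> T \<Longrightarrow> b \<in> T \<Longrightarrow> b \<noteq> neg a \<Longrightarrow> a + b \<in> T"
  using meta_tangible unfolding meta_tangible_def by auto

lemma sum_notin_T_imp_eq_neg: "a \<in> T \<Longrightarrow> b \<in> T \<Longrightarrow> a + b \<notin> T \<Longrightarrow> b = neg a"
  using meta_tangible_sum_notin_imp_eq_neg[OF meta_tangible] .

lemma one_sum_neg_in_tang_circ: "one + neg one \<in> tang_circ T neg"
  unfolding tang_circ_def using one_in_T by auto

lemma neg_fixed_if_neg_one_eq_one:
  assumes "neg one = one" and "a \<in> T"
  shows "neg a = a"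
  using neg_act_right[OF \<open>a \<in> T\<close>, of one] act_one_right[OF \<open>a \<in> T\<close>] assms(1) by simp

lemma e'_in_T_imp_eq_one:
  assumes tangible: "one + neg one + one \<in> T"
  shows "one + neg one + one = one"
proof -
  have "(one + neg one + one) + neg one = (one + one) + neg (one + one)"
    by (simp add: neg_add ac_simps)
  then have "(one + neg one + one) + neg one \<notin> T"
    using sum_neg_notin_T by simp
  then have "neg one = neg (one + neg one + one)"
    using sum_notin_T_imp_eq_neg[OF tangible neg_in_T[OF one_in_T]] by simp
  then show ?thesis
    by (metis neg_neg)
qed

lemma one_add_one_eq_one_if_neg_one_ne_one:
  assumes "neg one \<noteq> one" and not_tangible: "one + neg one + one \<notin> T"
  shows "one + one = one"
proof -
  have two_in_T: "one + one \<in> T"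
    using add_in_T[OF one_in_T one_in_T] assms(1) by auto
  have "(one + one) + neg one \<notin> T"
    using not_tangible by (simp add: ac_simps)
  then have "neg one = neg (one + one)"
    using sum_notin_T_imp_eq_neg[OF two_in_T neg_in_T[OF one_in_T]] by simp
  then show ?thesis
    by (metis neg_neg)
qed

lemma double_eq_three_imp_eq_one:
  assumes neg_one: "neg one = one" and a_in_T: "a \<in> T"
    and double: "a + a = one + one + one"
  shows "a = one"
proof (rule ccontr)
  assume "a \<noteq> one"
  have neg_a: "neg a = a"
    using neg_fixed_if_neg_one_eq_one[OF neg_one a_in_T] .
  have one_a_in_T: "one + a \<in> T"
    using add_in_T[OF one_in_T a_in_T] \<open>a \<noteq> one\<close> neg_one by auto
  have "(one + a) + a = one + (a + a)"
    by (simp add: ac_simps)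
  also have "\<dots> = (one + one) + neg (one + one)"
    using double neg_one by (simp add: neg_add ac_simps)
  finally have "a = neg (one + a)"
    using sum_notin_T_imp_eq_neg[OF one_a_in_T a_in_T] sum_neg_notin_T by metis
  then have absorb: "one + a = a"
    using neg_a by (metis neg_neg)
  have triple: "a + a + a = a"
  proof -
    have "a + a + a = one + (one + (one + a))"
      using double by (simp add: ac_simps)
    then show ?thesis
      using absorb by simp
  qed
  have "one + one + one + one = (a + a) + one"
    using double by simp
  also have "\<dots> = a + (one + a)"
    by (simp add: ac_simps)
  also have "\<dots> = one + one + one"
    using absorb double by simp
  finally have "act a (one + one + one + one) = act a (one + one + one)"
    by simp
  then have "a + a + a + a = a + a + a"
    using act_add_right[OF a_in_T] act_one_right[OF a_in_T] by simp
  then have "a = (a + a) + neg (a + a)"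
    using triple neg_a by (simp add: neg_add ac_simps)
  then show False
    using sum_neg_notin_T a_in_T by metis
qed

end

theorem proposition7p2:
  fixes T :: "'a::comm_monoid_add set" and neg :: "'a \<Rightarrow> 'a"
    and act :: "'a \<Rightarrow> 'a \<Rightarrow> 'a" and one :: 'a
  assumes "T_monoid_module_triple T neg act one"
    and "meta_tangible T neg"
  defines "e \<equiv> one + neg one"
  defines "e' \<equiv> e + one"
  defines "three \<equiv> one + one + one"
  shows "let P1 = (e' \<in> T \<and> e' = one);
             P2 = (e' \<in> tang_circ T neg \<and> e' = e);
             P3 = (e' \<notin> T \<union> tang_circ T neg \<and> neg one = one \<and> e' = three)
         in (P1 \<or> P2 \<or> P3) \<and> \<not> (P1 \<and> P2) \<and> \<not> (P1 \<and> P3) \<and> \<not> (P2 \<and> P3)"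
proof -
  interpret meta_tangible_module_triple T neg act one
    using assms(1,2) by unfold_locales
  have "(e' \<in> T \<and> e' = one) \<or> (e' \<in> tang_circ T neg \<and> e' = e)
      \<or> (e' \<notin> T \<union> tang_circ T neg \<and> neg one = one \<and> e' = three)"
  proof (cases "e' \<in> T")
    case True
    then show ?thesis
      using e'_in_T_imp_eq_one unfolding e'_def e_def by simp
  next
    case False
    consider "neg one \<noteq> one" | "neg one = one" "e' \<in> tang_circ T neg"
      | "neg one = one" "e' \<notin> tang_circ T neg"
      by blast
    then show ?thesis
    proof cases
      case 1
      then have "one + one = one"
        using one_add_one_eq_one_if_neg_one_ne_one False unfolding e'_def e_def by simp
      moreover have "e' = (one + one) + neg one"
        unfolding e'_def e_def by (simp add: ac_simps)
      ultimately have "e' = e"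
        unfolding e_def by simp
      then show ?thesis
        using one_sum_neg_in_tang_circ unfolding e_def by simp
    next
      case 2
      then obtain a where a_in_T: "a \<in> T" and "e' = a + neg a"
        unfolding tang_circ_def by auto
      then have "a + a = one + one + one"
        using 2 neg_fixed_if_neg_one_eq_one[OF _ a_in_T] unfolding e'_def e_def by simp
      then have "a = one"
        using double_eq_three_imp_eq_one[OF _ a_in_T] 2 by simp
      then show ?thesis
        using 2 \<open>e' = a + neg a\<close> unfolding e_def by simp
    next
      case 3
      then show ?thesis
        using False unfolding e'_def e_def three_def by simp
    qed
  qed
  moreover have "e' \<in> tang_circ T neg \<Longrightarrow> e' \<notin> T"
    using T_triple_tang_circ_disjoint[OF T_triple] by blast
  ultimately show ?thesis
    unfolding Let_def by blast
qed

end
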